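(* Let $n\ge 2$. The set $\mathcal B=\{[in|jn] : i,j\in[n-1]\}$ is a lattice basis of the Veronese lattice $L_n=\ker_{\mathbb{Z}}(V_n)\subset\mathbb{Z}^{\binom{n+1}{2}}$.
   Context: $[n]=\{1,\dots,n\}$. $\mathbb{Z}^{\binom{n+1}{2}}$ has standard basis $e_{ij}$, $1\le i\le j\le n$, with the convention $e_{ij}=e_{ji}$. For $i,j,k,l\in[n]$, $[ij|kl]:=e_{ik}+e_{jl}-e_{il}-e_{jk}$ (note $[in|jn]=[jn|in]$). $V_n$ is the $n\times\binom{n+1}{2}$ integer matrix whose column indexed by $jk$ is $e_j+e_k\in\mathbb{Z}^n$. *)

theory Defs
  imports Main
begin

text \<open>Vectors of Z^(binom(n+1,2)) are modelled as functions nat \<times> nat \<Rightarrow> int,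
  indexed by pairs (i,j) with 1 \<le> i \<le> j \<le> n and vanishing elsewhere.\<close>

definition idx :: "nat \<Rightarrow> (nat \<times> nat) set" where
  "idx n = {(i,j). 1 \<le> i \<and> i \<le> j \<and> j \<le> n}"

definition evec :: "nat \<Rightarrow> nat \<Rightarrow> (nat \<times> nat \<Rightarrow> int)" where
  "evec i j = (\<lambda>p. if p = (min i j, max i j) then 1 else 0)"

definition brk :: "nat \<Rightarrow> nat \<Rightarrow> nat \<Rightarrow> nat \<Rightarrow> (nat \<times> nat \<Rightarrow> int)" where
  "brk i j k l = (\<lambda>p. evec i k p + evec j l p - evec i l p - evec j k p)"

text \<open>The matrix V_n applied to x: column jk is e_j + e_k.\<close>
definition Vmul :: "nat \<Rightarrow> (nat \<times> nat \<Rightarrow> int) \<Rightarrow> nat \<Rightarrow> int" where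
  "Vmul n x m = (\<Sum>p\<in>idx n. x p * (of_bool (fst p = m) + of_bool (snd p = m)))"

definition veronese_lattice :: "nat \<Rightarrow> (nat \<times> nat \<Rightarrow> int) set" where
  "veronese_lattice n = {x. (\<forall>p. p \<notin> idx n \<longrightarrow> x p = 0) \<and> (\<forall>m\<in>{1..n}. Vmul n x m = 0)}"

definition lattice_basis :: "('a \<Rightarrow> int) set \<Rightarrow> ('a \<Rightarrow> int) set \<Rightarrow> bool" where
  "lattice_basis B L \<longleftrightarrow> finite B \<and> B \<subseteq> L \<and>
     (\<forall>c. (\<lambda>p. \<Sum>b\<in>B. c b * b p) = (\<lambda>p. 0) \<longrightarrow> (\<forall>b\<in>B. c b = 0)) \<and>
     (\<forall>x\<in>L. \<exists>c. x = (\<lambda>p. \<Sum>b\<in>B. c b * b p))"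

definition Bset :: "nat \<Rightarrow> (nat \<times> nat \<Rightarrow> int) set" where
  "Bset n = {brk i n j n | i j. i \<in> {1..n-1} \<and> j \<in> {1..n-1}}"

end

theory Submission
  imports Defs
begin

text \<open>The vectors [in|jn] with 1 \<le> i \<le> j < n have, on the coordinates ij with j < n, exactly
  one nonzero entry, a 1 at ij. So the coefficients of an integer combination of them can be
  read off on these coordinates, which gives independence. For spanning, subtract from x in L_n
  the combination with coefficients x_ij (j < n); the difference y lies in L_n and is supported
  on the last column. Row m < n of V_n then reads y_mn = 0, and row n reads 2 y_nn = 0.\<close>

definition low_idx :: "nat \<Rightarrow> (nat \<times> nat) set" where
  "low_idx n = {(i,j). 1 \<le> i \<and> i \<le> j \<and> j \<le> n - 1}"

definition bvec :: "nat \<Rightarrow> nat \<times> nat \<Rightarrow> (nat \<times> nat \<Rightarrow> int)" where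
  "bvec n q = brk (fst q) n (snd q) n"

lemma finite_idx: "finite (idx n)"
  by (rule finite_subset[of _ "{0..n} \<times> {0..n}"]) (auto simp: idx_def)

lemma finite_low_idx: "finite (low_idx n)"
  by (rule finite_subset[of _ "{0..n} \<times> {0..n}"]) (auto simp: low_idx_def)

lemma idx_eq_low_idx_Un_last_column:
  assumes "n \<ge> 2"
  shows "idx n = low_idx n \<union> (\<lambda>k. (k, n)) ` {1..n}"
  using assms unfolding idx_def low_idx_def by auto

lemma brk_last_commute: "brk i n j n = brk j n i n"
  unfolding brk_def evec_def by (rule ext) (auto simp: min_def max_def)

text \<open>Since [in|jn] = [jn|in], restricting to i \<le> j indexes each element of Bset exactly once.\<close>

lemma Bset_eq_image_bvec: "Bset n = bvec n ` low_idx n"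
proof
  show "Bset n \<subseteq> bvec n ` low_idx n"
  proof
    fix b assume "b \<in> Bset n"
    then obtain i j where b: "b = brk i n j n" "i \<in> {1..n-1}" "j \<in> {1..n-1}"
      unfolding Bset_def by blast
    have "b = bvec n (min i j, max i j)"
      using b brk_last_commute[of i n j] by (auto simp: bvec_def min_def max_def)
    moreover have "(min i j, max i j) \<in> low_idx n" using b by (auto simp: low_idx_def)
    ultimately show "b \<in> bvec n ` low_idx n" by blast
  qed
next
  show "bvec n ` low_idx n \<subseteq> Bset n"
  proof
    fix b assume "b \<in> bvec n ` low_idx n"
    then obtain i j where "b = brk i n j n" "(i, j) \<in> low_idx n"
      unfolding bvec_def by auto
    then show "b \<in> Bset n" unfolding Bset_def low_idx_def by fastforce
  qed
qed

lemma bvec_on_low_idx: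
  assumes "q \<in> low_idx n" "p \<in> low_idx n"
  shows "bvec n q p = of_bool (q = p)"
  using assms unfolding low_idx_def bvec_def brk_def evec_def
  by (cases q, cases p) (auto simp: min_def max_def)

lemma inj_on_bvec: "inj_on (bvec n) (low_idx n)"
proof
  fix q q' assume "q \<in> low_idx n" "q' \<in> low_idx n" "bvec n q = bvec n q'"
  then have "bvec n q q = bvec n q' q" by simp
  with \<open>q \<in> low_idx n\<close> \<open>q' \<in> low_idx n\<close> show "q = q'" by (simp add: bvec_on_low_idx)
qed

lemma sum_Bset_eq_sum_low_idx:
  "(\<Sum>b\<in>Bset n. c b * b p) = (\<Sum>q\<in>low_idx n. c (bvec n q) * bvec n q p)"
  unfolding Bset_eq_image_bvec using inj_on_bvec by (simp add: sum.reindex)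

lemma bvec_combination_on_low_idx:
  assumes "p \<in> low_idx n"
  shows "(\<Sum>q\<in>low_idx n. c q * bvec n q p) = c p"
proof -
  have "(\<Sum>q\<in>low_idx n. c q * bvec n q p) = (\<Sum>q\<in>low_idx n. if q = p then c q else 0)"
    by (rule sum.cong) (auto simp: bvec_on_low_idx assms)
  also have "\<dots> = c p" using assms finite_low_idx by simp
  finally show ?thesis .
qed

lemma Vmul_evec:
  assumes "1 \<le> a" "a \<le> n" "1 \<le> b" "b \<le> n"
  shows "Vmul n (evec a b) m = of_bool (a = m) + of_bool (b = m)"
proof -
  let ?w = "\<lambda>p::nat\<times>nat. (of_bool (fst p = m) + of_bool (snd p = m)) :: int"
  have mem: "(min a b, max a b) \<in> idx n" using assms by (auto simp: idx_def)
  have "Vmul n (evec a b) m = (\<Sum>p\<in>idx n. if p = (min a b, max a b) then ?w p else 0)"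
    unfolding Vmul_def evec_def by (rule sum.cong) auto
  also have "\<dots> = ?w (min a b, max a b)" using mem finite_idx by simp
  also have "\<dots> = of_bool (a = m) + of_bool (b = m)" by (auto simp: min_def max_def)
  finally show ?thesis .
qed

lemma Vmul_brk:
  assumes "i \<in> {1..n}" "j \<in> {1..n}" "k \<in> {1..n}" "l \<in> {1..n}"
  shows "Vmul n (brk i j k l) m = 0"
proof -
  have "Vmul n (brk i j k l) m = Vmul n (evec i k) m + Vmul n (evec j l) m
      - Vmul n (evec i l) m - Vmul n (evec j k) m"
    unfolding Vmul_def brk_def by (simp add: sum.distrib sum_subtractf algebra_simps)
  also have "\<dots> = 0" using assms by (simp add: Vmul_evec)
  finally show ?thesis .
qed

lemma Vmul_sum:
  "Vmul n (\<lambda>p. \<Sum>q\<in>A. c q * f q p) m = (\<Sum>q\<in>A. c q * Vmul n (f q) m)"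
  unfolding Vmul_def
  by (simp add: sum_distrib_left sum_distrib_right mult.assoc sum.swap[of _ A])

lemma Vmul_diff: "Vmul n (\<lambda>p. f p - g p) m = Vmul n f m - Vmul n g m"
  unfolding Vmul_def by (simp add: sum_subtractf algebra_simps)

lemma veronese_lattice_diff:
  assumes "x \<in> veronese_lattice n" "y \<in> veronese_lattice n"
  shows "(\<lambda>p. x p - y p) \<in> veronese_lattice n"
  using assms by (simp add: veronese_lattice_def Vmul_diff)

lemma bvec_in_veronese_lattice:
  assumes "n \<ge> 2" "q \<in> low_idx n"
  shows "bvec n q \<in> veronese_lattice n"
proof -
  have "bvec n q p = 0" if "p \<notin> idx n" for p
    using assms that unfolding low_idx_def bvec_def brk_def evec_def idx_def
    by (cases q, cases p) (auto simp: min_def max_def)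
  moreover have "Vmul n (bvec n q) m = 0" for m
    using assms unfolding bvec_def by (intro Vmul_brk) (auto simp: low_idx_def)
  ultimately show ?thesis by (simp add: veronese_lattice_def)
qed

lemma bvec_combination_in_veronese_lattice:
  assumes "n \<ge> 2"
  shows "(\<lambda>p. \<Sum>q\<in>low_idx n. c q * bvec n q p) \<in> veronese_lattice n"
  using bvec_in_veronese_lattice[OF assms]
  by (simp add: veronese_lattice_def Vmul_sum)

lemma Vmul_supported_on_last_column:
  assumes "n \<ge> 2" "\<And>p. p \<in> low_idx n \<Longrightarrow> y p = 0"
  shows "Vmul n y m = (\<Sum>k\<in>{1..n}. y (k,n) * (of_bool (k = m) + of_bool (n = m)))"
proof -
  have "Vmul n y m
      = (\<Sum>p\<in>(\<lambda>k. (k, n)) ` {1..n}. y p * (of_bool (fst p = m) + of_bool (snd p = m)))"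
    unfolding Vmul_def
    by (rule sum.mono_neutral_right)
       (auto simp: idx_eq_low_idx_Un_last_column[OF assms(1)] assms(2) finite_low_idx)
  also have "\<dots> = (\<Sum>k\<in>{1..n}. y (k,n) * (of_bool (k = m) + of_bool (n = m)))"
    by (subst sum.reindex) (auto simp: inj_on_def)
  finally show ?thesis .
qed

lemma veronese_lattice_eq_0_if_vanishes_on_low_idx:
  assumes "n \<ge> 2" "y \<in> veronese_lattice n" "\<And>p. p \<in> low_idx n \<Longrightarrow> y p = 0"
  shows "y = (\<lambda>p. 0)"
proof -
  have row: "(\<Sum>k\<in>{1..n}. y (k,n) * (of_bool (k = m) + of_bool (n = m))) = 0"
    if "m \<in> {1..n}" for m
    using assms that Vmul_supported_on_last_column[OF assms(1,3)]
    by (simp add: veronese_lattice_def)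
  have low: "y (m,n) = 0" if "1 \<le> m" "m < n" for m
  proof -
    have "(\<Sum>k\<in>{1..n}. y (k,n) * (of_bool (k = m) + of_bool (n = m)))
        = (\<Sum>k\<in>{1..n}. if k = m then y (k,n) else 0)"
      by (rule sum.cong) (use that in auto)
    also have "\<dots> = y (m,n)" using that by simp
    finally show ?thesis using row[of m] that by simp
  qed
  have top: "y (n,n) = 0"
  proof -
    have "(\<Sum>k\<in>{1..n}. y (k,n) * (of_bool (k = n) + of_bool (n = n)))
        = (\<Sum>k\<in>{1..n}. if k = n then 2 * y (k,n) else 0)"
      by (rule sum.cong) (auto simp: low)
    also have "\<dots> = 2 * y (n,n)" using assms(1) by simp
    finally show ?thesis using row[of n] assms(1) by simp
  qed
  have "y p = 0" for p
  proof (cases "p \<in> idx n")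
    case True
    then consider "p \<in> low_idx n" | k where "p = (k,n)" "k \<in> {1..n}"
      unfolding idx_eq_low_idx_Un_last_column[OF assms(1)] by blast
    then show ?thesis
      by cases (use assms(3) low top in \<open>auto simp: nat_less_le\<close>)
  next
    case False
    then show ?thesis using assms(2) by (cases p) (simp add: veronese_lattice_def)
  qed
  then show ?thesis by auto
qed

lemma Bset_independent:
  assumes "(\<lambda>p. \<Sum>b\<in>Bset n. c b * b p) = (\<lambda>p. 0)" "b \<in> Bset n"
  shows "c b = 0"
proof -
  obtain q where q: "q \<in> low_idx n" "b = bvec n q"
    using assms(2) unfolding Bset_eq_image_bvec by blast
  have "0 = (\<Sum>b\<in>Bset n. c b * b q)" using fun_cong[OF assms(1), of q] by simp
  also have "\<dots> = c b"
    using q by (simp add: sum_Bset_eq_sum_low_idx bvec_combination_on_low_idx)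
  finally show ?thesis by simp
qed

lemma Bset_spans_veronese_lattice:
  assumes "n \<ge> 2" "x \<in> veronese_lattice n"
  shows "\<exists>c. x = (\<lambda>p. \<Sum>b\<in>Bset n. c b * b p)"
proof -
  define s where "s = (\<lambda>p. \<Sum>q\<in>low_idx n. x q * bvec n q p)"
  define c where "c = (\<lambda>b. x (inv_into (low_idx n) (bvec n) b))"
  have "s \<in> veronese_lattice n"
    unfolding s_def by (rule bvec_combination_in_veronese_lattice[OF assms(1)])
  then have "(\<lambda>p. x p - s p) \<in> veronese_lattice n"
    using assms(2) by (rule veronese_lattice_diff[rotated])
  moreover have "x p - s p = 0" if "p \<in> low_idx n" for p
    using that by (simp add: s_def bvec_combination_on_low_idx)
  ultimately have "(\<lambda>p. x p - s p) = (\<lambda>p. 0)"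
    using veronese_lattice_eq_0_if_vanishes_on_low_idx[OF assms(1)] by blast
  then have "x = s" by (simp add: fun_eq_iff)
  also have "s = (\<lambda>p. \<Sum>b\<in>Bset n. c b * b p)"
    unfolding s_def c_def sum_Bset_eq_sum_low_idx
    by (rule ext, rule sum.cong) (auto simp: inv_into_f_f[OF inj_on_bvec])
  finally show ?thesis by blast
qed

theorem lemma2p1:
  fixes n :: nat
  assumes "n \<ge> 2"
  shows "lattice_basis (Bset n) (veronese_lattice n)"
proof -
  have "finite (Bset n)"
    unfolding Bset_eq_image_bvec using finite_low_idx by (rule finite_imageI)
  moreover have "Bset n \<subseteq> veronese_lattice n"
    unfolding Bset_eq_image_bvec using bvec_in_veronese_lattice[OF assms] by blast
  ultimately show ?thesis
    unfolding lattice_basis_def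
    using Bset_independent Bset_spans_veronese_lattice[OF assms] by blast
qed

end
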